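(* Let $C$ be a linear code over $\mathbb{Z}_4$ of length $n$ and type $4^{k_1}2^{k_2}$, with generator matrix $G\in\mathbb{Z}_4^{(k_1+k_2)\times n}$. Suppose no column of $G$ lies in $(2\mathbb{Z}_4)^{k_1+k_2}$, and let $\mathbf{S}$ be a coset of $(2\mathbb{Z}_4)^{k_1+k_2}$ in $\mathbb{Z}_4^{k_1+k_2}$ other than $(2\mathbb{Z}_4)^{k_1+k_2}$ itself. Then $$\sum_{\mathbf{x}\in\mathbf{S}}w_L(\mathbf{x}G)=2^{k_1+k_2}n.$$
   Context: A linear code of length $n$ over $\mathbb{Z}_4$ is a $\mathbb{Z}_4$-submodule of $\mathbb{Z}_4^n$, of type $4^{k_1}2^{k_2}$ if isomorphic to $\mathbb{Z}_4^{k_1}\times\mathbb{Z}_2^{k_2}$. A generator matrix is a matrix whose rows generate the code and no proper subset of whose rows does. $2\mathbb{Z}_4=\{0,2\}$. Lee weight: $w_L(0)=0,w_L(1)=1,w_L(2)=2,w_L(3)=1$, additive on vectors. *)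

theory Defs
  imports "HOL-Library.Numeral_Type"
begin

text \<open>Z4 is the library ring type 4 (integers modulo 4). Vectors of length n over Z4
  are functions nat to 4 vanishing at all indices at least n.\<close>

definition vecs :: "nat \<Rightarrow> (nat \<Rightarrow> 4) set" where
  "vecs n = {v. \<forall>i. n \<le> i \<longrightarrow> v i = 0}"

definition two_vecs :: "nat \<Rightarrow> (nat \<Rightarrow> 4) set" where
  "two_vecs k = {v \<in> vecs k. \<forall>i. v i \<in> {0, 2}}"

definition vmul :: "nat \<Rightarrow> nat \<Rightarrow> (nat \<Rightarrow> 4) \<Rightarrow> (nat \<Rightarrow> nat \<Rightarrow> 4) \<Rightarrow> (nat \<Rightarrow> 4)" where
  "vmul k n x G = (\<lambda>j. if j < n then (\<Sum>i<k. x i * G i j) else 0)"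

definition row_span :: "nat \<Rightarrow> (nat \<Rightarrow> nat \<Rightarrow> 4) \<Rightarrow> nat set \<Rightarrow> (nat \<Rightarrow> 4) set" where
  "row_span n G I = {(\<lambda>j. if j < n then (\<Sum>i\<in>I. x i * G i j) else 0) | x. True}"

definition linear_code :: "nat \<Rightarrow> (nat \<Rightarrow> 4) set \<Rightarrow> bool" where
  "linear_code n C \<longleftrightarrow> C \<subseteq> vecs n \<and> (\<lambda>_. 0) \<in> C
     \<and> (\<forall>u\<in>C. \<forall>v\<in>C. (\<lambda>j. u j + v j) \<in> C)
     \<and> (\<forall>c. \<forall>u\<in>C. (\<lambda>j. c * u j) \<in> C)"

definition generator_matrix :: "nat \<Rightarrow> nat \<Rightarrow> (nat \<Rightarrow> nat \<Rightarrow> 4) \<Rightarrow> (nat \<Rightarrow> 4) set \<Rightarrow> bool" where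
  "generator_matrix k n G C \<longleftrightarrow> row_span n G {..<k} = C \<and> (\<forall>I. I \<subset> {..<k} \<longrightarrow> row_span n G I \<noteq> C)"

text \<open>Model of Z4^k1 x Z2^k2 as a Z4-module: Z2 is realised as the submodule {0,2} of Z4.\<close>
definition type_space :: "nat \<Rightarrow> nat \<Rightarrow> (nat \<Rightarrow> 4) set" where
  "type_space k1 k2 = {y \<in> vecs (k1 + k2). \<forall>i. k1 \<le> i \<longrightarrow> y i \<in> {0, 2}}"

definition has_type :: "(nat \<Rightarrow> 4) set \<Rightarrow> nat \<Rightarrow> nat \<Rightarrow> bool" where
  "has_type C k1 k2 \<longleftrightarrow> (\<exists>f. bij_betw f (type_space k1 k2) C
     \<and> (\<forall>x\<in>type_space k1 k2. \<forall>y\<in>type_space k1 k2. f (\<lambda>i. x i + y i) = (\<lambda>j. f x j + f y j))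
     \<and> (\<forall>c. \<forall>x\<in>type_space k1 k2. f (\<lambda>i. c * x i) = (\<lambda>j. c * f x j)))"

definition lee :: "4 \<Rightarrow> nat" where
  "lee a = (if a = 0 then 0 else if a = 2 then 2 else 1)"

definition lee_wt :: "nat \<Rightarrow> (nat \<Rightarrow> 4) \<Rightarrow> nat" where
  "lee_wt n v = (\<Sum>j<n. lee (v j))"

end

theory Submission
  imports Defs
begin

text \<open>Fix a column g of G and an index i0 with g i0 odd. Adding 2 to the coordinate i0
  of x is an involution of the coset S which changes the entry x g of xG by 2 g i0 = 2.
  As lee a + lee (a + 2) = 2 for every a in Z4, each such pair of vectors contributes 2
  to the Lee weight in this column, so the column contributes |S| = 2^(k1+k2) in total.\<close>

lemma Z4_cases:
  fixes a :: 4
  obtains "a = 0" | "a = 1" | "a = 2" | "a = 3"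
proof (cases a)
  case (of_int z)
  then have "z = 0 \<or> z = 1 \<or> z = 2 \<or> z = 3" by auto
  with of_int that show ?thesis by auto
qed

lemma lee_add_two: "lee a + lee (a + 2) = 2"
  by (cases a rule: Z4_cases) (simp_all add: lee_def)

lemma two_mult_odd:
  fixes g :: 4
  shows "g \<notin> {0, 2} \<Longrightarrow> 2 * g = 2"
  by (cases g rule: Z4_cases) simp_all

lemma two_vecs_eq_image_Pow:
  "two_vecs k = (\<lambda>A i. if i \<in> A then 2 else 0) ` Pow {..<k}"
proof (intro equalityI subsetI)
  fix t assume t: "t \<in> two_vecs k"
  have "t i = (if i \<in> {i. i < k \<and> t i = 2} then 2 else 0)" for i
    using t by (cases "i < k") (auto simp: two_vecs_def vecs_def)
  then show "t \<in> (\<lambda>A i. if i \<in> A then 2 else 0) ` Pow {..<k}"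
    by (intro image_eqI[where x = "{i. i < k \<and> t i = 2}"]) auto
qed (auto simp: two_vecs_def vecs_def)

lemma card_two_vecs: "card (two_vecs k) = 2 ^ k"
proof -
  have "inj (\<lambda>A i. if i \<in> A then (2::4) else 0)"
    by (rule injI) (simp add: fun_eq_iff split: if_splits; blast)
  then have "card ((\<lambda>A i. if i \<in> A then (2::4) else 0) ` Pow {..<k}) = card (Pow {..<k})"
    using card_image inj_on_subset subset_UNIV by blast
  then show ?thesis
    by (simp add: two_vecs_eq_image_Pow card_Pow)
qed

lemma sum_paired_by_involution:
  fixes h :: "'a \<Rightarrow> 'b::comm_semiring_1"
  assumes "\<And>x. x \<in> A \<Longrightarrow> \<phi> x \<in> A" and "\<And>x. x \<in> A \<Longrightarrow> \<phi> (\<phi> x) = x"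
    and "\<And>x. x \<in> A \<Longrightarrow> h x + h (\<phi> x) = c"
  shows "2 * sum h A = of_nat (card A) * c"
proof -
  have "sum h A = sum (h \<circ> \<phi>) A"
    by (rule sum.reindex_bij_witness[where i = \<phi> and j = \<phi>]) (simp_all add: assms)
  then have "2 * sum h A = (\<Sum>x\<in>A. h x + h (\<phi> x))"
    by (simp add: mult_2 sum.distrib)
  also have "\<dots> = of_nat (card A) * c"
    by (simp add: assms(3))
  finally show ?thesis .
qed

lemma sum_lee_column_over_coset:
  fixes g s :: "nat \<Rightarrow> 4"
  assumes "i0 < k" and "g i0 \<notin> {0, 2}"
  shows "(\<Sum>t\<in>two_vecs k. lee (\<Sum>i<k. (s i + t i) * g i)) = 2 ^ k"
proof -
  define f where "f t = (\<Sum>i<k. (s i + t i) * g i)" for t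
  define \<phi> where "\<phi> t = t(i0 := t i0 + 2)" for t :: "nat \<Rightarrow> 4"
  have \<phi>_closed: "\<phi> t \<in> two_vecs k" if "t \<in> two_vecs k" for t
  proof -
    have "t i0 + 2 \<in> {0, 2}"
      using that by (auto simp: two_vecs_def)
    with that \<open>i0 < k\<close> show ?thesis
      by (auto simp: two_vecs_def vecs_def \<phi>_def)
  qed
  have \<phi>_\<phi>: "\<phi> (\<phi> t) = t" for t
    by (auto simp: \<phi>_def)
  have f_\<phi>: "f (\<phi> t) = f t + 2" for t
  proof -
    have "f (\<phi> t) = (\<Sum>i<k. (s i + t i) * g i + (if i = i0 then 2 * g i else 0))"
      unfolding f_def \<phi>_def by (rule sum.cong) (auto simp: algebra_simps)
    also have "\<dots> = f t + 2 * g i0"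
      using \<open>i0 < k\<close> by (simp add: sum.distrib f_def)
    finally show ?thesis
      using two_mult_odd[OF \<open>g i0 \<notin> {0, 2}\<close>] by simp
  qed
  have "2 * (\<Sum>t\<in>two_vecs k. lee (f t)) = of_nat (card (two_vecs k)) * 2"
    by (rule sum_paired_by_involution[where \<phi> = \<phi>])
       (simp_all add: \<phi>_closed \<phi>_\<phi> f_\<phi> lee_add_two)
  then show ?thesis
    by (simp add: f_def card_two_vecs)
qed

lemma sum_over_translate:
  fixes s :: "'i \<Rightarrow> 'a::cancel_semigroup_add"
  shows "(\<Sum>x\<in>{(\<lambda>i. s i + t i) | t. t \<in> T}. f x) = (\<Sum>t\<in>T. f (\<lambda>i. s i + t i))"
proof -
  have "inj_on (\<lambda>t i. s i + t i) T"
    by (rule inj_onI) (simp add: fun_eq_iff)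
  moreover have "{(\<lambda>i. s i + t i) | t. t \<in> T} = (\<lambda>t i. s i + t i) ` T"
    by blast
  ultimately show ?thesis
    by (simp add: sum.reindex)
qed

lemma lee_wt_vmul: "lee_wt n (vmul k n x G) = (\<Sum>j<n. lee (\<Sum>i<k. x i * G i j))"
  by (simp add: lee_wt_def vmul_def)

theorem corollary3p7:
  fixes n k1 k2 :: nat and C :: "(nat \<Rightarrow> 4) set" and G :: "nat \<Rightarrow> nat \<Rightarrow> 4"
    and S :: "(nat \<Rightarrow> 4) set"
  assumes "linear_code n C"
    and "has_type C k1 k2"
    and "generator_matrix (k1 + k2) n G C"
    and "\<forall>j<n. \<exists>i<k1 + k2. G i j \<notin> {0, 2}"
    and "\<exists>s\<in>vecs (k1 + k2). S = {(\<lambda>i. s i + t i) | t. t \<in> two_vecs (k1 + k2)}"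
    and "S \<noteq> two_vecs (k1 + k2)"
  shows "(\<Sum>x\<in>S. lee_wt n (vmul (k1 + k2) n x G)) = 2 ^ (k1 + k2) * n"
proof -
  let ?k = "k1 + k2"
  obtain s where S: "S = {(\<lambda>i. s i + t i) | t. t \<in> two_vecs ?k}"
    using assms(5) by blast
  have "(\<Sum>x\<in>S. lee_wt n (vmul ?k n x G))
      = (\<Sum>t\<in>two_vecs ?k. \<Sum>j<n. lee (\<Sum>i<?k. (s i + t i) * G i j))"
    by (simp add: S sum_over_translate lee_wt_vmul)
  also have "\<dots> = (\<Sum>j<n. \<Sum>t\<in>two_vecs ?k. lee (\<Sum>i<?k. (s i + t i) * G i j))"
    by (rule sum.swap)
  also have "\<dots> = (\<Sum>j<n. 2 ^ ?k)"
  proof (rule sum.cong[OF refl])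
    fix j assume "j \<in> {..<n}"
    with assms(4) obtain i0 where "i0 < ?k" "G i0 j \<notin> {0, 2}"
      by blast
    then show "(\<Sum>t\<in>two_vecs ?k. lee (\<Sum>i<?k. (s i + t i) * G i j)) = 2 ^ ?k"
      by (rule sum_lee_column_over_coset)
  qed
  finally show ?thesis
    by simp
qed

end
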